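(* Let $A$ be an integral quantum B-algebra, let $X,F\in U(A)$ and let $F$ be a filter of $A$. Then: (1) $\mu_F(X)=\big(\mu_F(X)\cdot\mu_F(X)\big)\cap X$; (2) if $1\in \mu_F(X)\leadsto(\mu_F(X)\to X)$, then $\mu_F(X)\cdot\mu_F\big(\mu_F(X)\leadsto(\mu_F(X)\to X)\big)\cdot\mu_F(X)=\mu_F(X)$; (3) $\mu_F(X)$ is a filter of $A$ if and only if $1\in \mu_F(X)\cap\big(\mu_F(X)\leadsto(\mu_F(X)\to X)\big)$.
   Context: A quantum B-algebra is a poset $(A,\le)$ with binary operations $\to,\leadsto$ such that for all $x,y,z\in A$: $y\to z\le(x\to y)\to(x\to z)$; $y\leadsto z\le(x\leadsto y)\leadsto(x\leadsto z)$; $y\le z$ implies $x\to y\le x\to z$; and $x\le y\to z$ iff $y\le x\leadsto z$. It is integral if it has a greatest element $1$ with $1\to x=1\leadsto x=x$ for all $x$. $U(A)$ denotes the set of all upper subsets of $A$ (including $\emptyset$), a quantale under inclusion with multiplication $X\cdot Y=\{a\in A\mid\exists y\in Y:\ y\to a\in X\}$. Its residuals are: for $Y,Z\in U(A)$, $Y\to Z$ is the largest $W\in U(A)$ with $W\cdot Y\subseteq Z$, and for $X,Z\in U(A)$, $X\leadsto Z$ is the largest $W\in U(A)$ with $X\cdot W\subseteq Z$. A filter of $A$ is a nonempty $F\in U(A)$ with $F\cdot F\subseteq F$. For $F,X\in U(A)$, $\mu_F(X)=F\cap X$. *)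

theory Defs
  imports Main
begin

text \<open>A quantum B-algebra on the carrier given by the whole type 'a, with partial
order le and the two arrows imp (written \<rightarrow>) and limp (written \<leadsto>).\<close>

definition quantum_B_algebra ::
  "('a \<Rightarrow> 'a \<Rightarrow> bool) \<Rightarrow> ('a \<Rightarrow> 'a \<Rightarrow> 'a) \<Rightarrow> ('a \<Rightarrow> 'a \<Rightarrow> 'a) \<Rightarrow> bool" where
  "quantum_B_algebra le imp limp \<longleftrightarrow>
     (\<forall>x. le x x) \<and>
     (\<forall>x y. le x y \<and> le y x \<longrightarrow> x = y) \<and>
     (\<forall>x y z. le x y \<and> le y z \<longrightarrow> le x z) \<and>
     (\<forall>x y z. le (imp y z) (imp (imp x y) (imp x z))) \<and>
     (\<forall>x y z. le (limp y z) (limp (limp x y) (limp x z))) \<and>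
     (\<forall>x y z. le y z \<longrightarrow> le (imp x y) (imp x z)) \<and>
     (\<forall>x y z. le x (imp y z) \<longleftrightarrow> le y (limp x z))"

definition integral_qBa ::
  "('a \<Rightarrow> 'a \<Rightarrow> bool) \<Rightarrow> ('a \<Rightarrow> 'a \<Rightarrow> 'a) \<Rightarrow> ('a \<Rightarrow> 'a \<Rightarrow> 'a) \<Rightarrow> 'a \<Rightarrow> bool" where
  "integral_qBa le imp limp one \<longleftrightarrow>
     quantum_B_algebra le imp limp \<and>
     (\<forall>x. le x one) \<and> (\<forall>x. imp one x = x \<and> limp one x = x)"

definition upsets :: "('a \<Rightarrow> 'a \<Rightarrow> bool) \<Rightarrow> 'a set set" where
  "upsets le = {X. \<forall>x y. x \<in> X \<and> le x y \<longrightarrow> y \<in> X}"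

definition umult :: "('a \<Rightarrow> 'a \<Rightarrow> 'a) \<Rightarrow> 'a set \<Rightarrow> 'a set \<Rightarrow> 'a set" where
  "umult imp X Y = {a. \<exists>y\<in>Y. imp y a \<in> X}"

text \<open>Residuals in U(A): the largest upper set W with W\<cdot>Y \<subseteq> Z (resp. X\<cdot>W \<subseteq> Z),
  i.e. the union of all such upper sets.\<close>
definition uimp :: "('a \<Rightarrow> 'a \<Rightarrow> bool) \<Rightarrow> ('a \<Rightarrow> 'a \<Rightarrow> 'a) \<Rightarrow> 'a set \<Rightarrow> 'a set \<Rightarrow> 'a set" where
  "uimp le imp Y Z = \<Union>{W \<in> upsets le. umult imp W Y \<subseteq> Z}"

definition ulimp :: "('a \<Rightarrow> 'a \<Rightarrow> bool) \<Rightarrow> ('a \<Rightarrow> 'a \<Rightarrow> 'a) \<Rightarrow> 'a set \<Rightarrow> 'a set \<Rightarrow> 'a set" where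
  "ulimp le imp X Z = \<Union>{W \<in> upsets le. umult imp X W \<subseteq> Z}"

definition qfilter :: "('a \<Rightarrow> 'a \<Rightarrow> bool) \<Rightarrow> ('a \<Rightarrow> 'a \<Rightarrow> 'a) \<Rightarrow> 'a set \<Rightarrow> bool" where
  "qfilter le imp F \<longleftrightarrow> F \<noteq> {} \<and> F \<in> upsets le \<and> umult imp F F \<subseteq> F"

definition mu :: "'a set \<Rightarrow> 'a set \<Rightarrow> 'a set" where
  "mu F X = F \<inter> X"

end

theory Submission
  imports Defs
begin

text \<open>Everything reduces to inclusion chasing in the residuated monoid U(A): the product is
  monotone and residuated by the two arrows, every nonempty upper set contains 1 and then acts
  as a unit from either side up to inclusion (since 1 \<rightarrow> a = a and a \<rightarrow> a = 1), and every
  product of subsets of the filter F stays inside F. With M = F \<inter> X, the condition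
  1 \<in> M \<leadsto> (M \<rightarrow> X) yields M \<subseteq> M \<cdot> (M \<leadsto> (M \<rightarrow> X)) \<subseteq> M \<rightarrow> X, i.e. M \<cdot> M \<subseteq> X, which is
  what closes M under the product.\<close>

lemma umult_mono:
  "X \<subseteq> X' \<Longrightarrow> Y \<subseteq> Y' \<Longrightarrow> umult imp X Y \<subseteq> umult imp X' Y'"
  unfolding umult_def by blast

lemma upsets_Int: "A \<in> upsets le \<Longrightarrow> B \<in> upsets le \<Longrightarrow> A \<inter> B \<in> upsets le"
  unfolding upsets_def by blast

lemma umult_uimp_subset: "umult imp (uimp le imp Y Z) Y \<subseteq> Z"
  unfolding umult_def uimp_def by blast

lemma umult_ulimp_subset: "umult imp Y (ulimp le imp Y Z) \<subseteq> Z"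
  unfolding umult_def ulimp_def by blast

lemma umult_subset_iff_subset_uimp:
  assumes "W \<in> upsets le"
  shows "umult imp W Y \<subseteq> Z \<longleftrightarrow> W \<subseteq> uimp le imp Y Z"
proof
  show "umult imp W Y \<subseteq> Z \<Longrightarrow> W \<subseteq> uimp le imp Y Z"
    using assms unfolding uimp_def by blast
next
  assume "W \<subseteq> uimp le imp Y Z"
  then have "umult imp W Y \<subseteq> umult imp (uimp le imp Y Z) Y"
    by (rule umult_mono) simp
  also have "\<dots> \<subseteq> Z"
    by (rule umult_uimp_subset)
  finally show "umult imp W Y \<subseteq> Z" .
qed

lemma umult_subset_iff_subset_ulimp:
  assumes "W \<in> upsets le"
  shows "umult imp Y W \<subseteq> Z \<longleftrightarrow> W \<subseteq> ulimp le imp Y Z"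
proof
  show "umult imp Y W \<subseteq> Z \<Longrightarrow> W \<subseteq> ulimp le imp Y Z"
    using assms unfolding ulimp_def by blast
next
  assume "W \<subseteq> ulimp le imp Y Z"
  then have "umult imp Y W \<subseteq> umult imp Y (ulimp le imp Y Z)"
    by (rule umult_mono[OF subset_refl])
  also have "\<dots> \<subseteq> Z"
    by (rule umult_ulimp_subset)
  finally show "umult imp Y W \<subseteq> Z" .
qed

lemma imp_self:
  assumes "integral_qBa le imp limp one"
  shows "imp x x = one"
proof -
  have qba: "quantum_B_algebra le imp limp" and top: "le (imp x x) one"
    and "limp one x = x"
    using assms unfolding integral_qBa_def by auto
  moreover have "le one (imp x x) \<longleftrightarrow> le x (limp one x)" and "le x x"
    using qba unfolding quantum_B_algebra_def by blast+
  ultimately have "le one (imp x x)"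
    by simp
  with qba top show ?thesis
    unfolding quantum_B_algebra_def by blast
qed

lemma upset_contains_one:
  assumes "integral_qBa le imp limp one" "X \<in> upsets le" "a \<in> X"
  shows "one \<in> X"
  using assms unfolding integral_qBa_def upsets_def by blast

lemma subset_umult_if_one_right:
  assumes "integral_qBa le imp limp one" "one \<in> Y"
  shows "X \<subseteq> umult imp X Y"
proof
  fix a assume "a \<in> X"
  moreover have "imp one a = a"
    using assms(1) unfolding integral_qBa_def by blast
  ultimately have "imp one a \<in> X"
    by simp
  with assms(2) show "a \<in> umult imp X Y"
    unfolding umult_def by blast
qed

lemma subset_umult_if_one_left:
  assumes "integral_qBa le imp limp one" "one \<in> X"
  shows "Y \<subseteq> umult imp X Y"
proof
  fix a assume "a \<in> Y"
  moreover have "imp a a \<in> X"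
    using assms(2) by (simp add: imp_self[OF assms(1)])
  ultimately show "a \<in> umult imp X Y"
    unfolding umult_def by blast
qed

lemma upset_subset_umult_self:
  assumes "integral_qBa le imp limp one" "X \<in> upsets le"
  shows "X \<subseteq> umult imp X X"
proof
  fix a assume "a \<in> X"
  then have "one \<in> X"
    by (rule upset_contains_one[OF assms])
  with \<open>a \<in> X\<close> show "a \<in> umult imp X X"
    using subset_umult_if_one_left[OF assms(1)] by blast
qed

lemma qfilter_umult_subset:
  assumes "qfilter le imp F" "X \<subseteq> F" "Y \<subseteq> F"
  shows "umult imp X Y \<subseteq> F"
proof -
  have "umult imp X Y \<subseteq> umult imp F F"
    using assms(2,3) by (rule umult_mono)
  also have "\<dots> \<subseteq> F"
    using assms(1) unfolding qfilter_def by blast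
  finally show ?thesis .
qed

lemma qfilter_contains_one:
  assumes "integral_qBa le imp limp one" "qfilter le imp F"
  shows "one \<in> F"
proof -
  obtain a where "a \<in> F" and "F \<in> upsets le"
    using assms(2) unfolding qfilter_def by blast
  then show ?thesis
    using upset_contains_one[OF assms(1)] by blast
qed

lemma Int_eq_umult_self_Int:
  assumes "integral_qBa le imp limp one" "X \<in> upsets le" "qfilter le imp F"
  shows "F \<inter> X = umult imp (F \<inter> X) (F \<inter> X) \<inter> X"
proof -
  have "F \<inter> X \<in> upsets le"
    using assms(2,3) upsets_Int unfolding qfilter_def by blast
  then have "F \<inter> X \<subseteq> umult imp (F \<inter> X) (F \<inter> X)"
    by (rule upset_subset_umult_self[OF assms(1)])
  moreover have "umult imp (F \<inter> X) (F \<inter> X) \<subseteq> F"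
    by (rule qfilter_umult_subset[OF assms(3)]) auto
  ultimately show ?thesis
    by blast
qed

lemma umult_Int_ulimp_Int:
  assumes "integral_qBa le imp limp one" "X \<in> upsets le" "qfilter le imp F"
    and "one \<in> ulimp le imp (F \<inter> X) (uimp le imp (F \<inter> X) X)"
  shows "umult imp (umult imp (F \<inter> X) (F \<inter> (ulimp le imp (F \<inter> X) (uimp le imp (F \<inter> X) X))))
           (F \<inter> X) = F \<inter> X"
proof -
  let ?M = "F \<inter> X" and ?N = "ulimp le imp (F \<inter> X) (uimp le imp (F \<inter> X) X)"
  let ?P = "umult imp (umult imp ?M (F \<inter> ?N)) ?M"
  have "?M \<in> upsets le"
    using assms(2,3) upsets_Int unfolding qfilter_def by blast
  then have "?M \<subseteq> umult imp ?M ?M"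
    by (rule upset_subset_umult_self[OF assms(1)])
  also have "\<dots> \<subseteq> ?P"
  proof (rule umult_mono[OF _ subset_refl])
    show "?M \<subseteq> umult imp ?M (F \<inter> ?N)"
      using qfilter_contains_one[OF assms(1,3)] assms(4)
      by (intro subset_umult_if_one_right[OF assms(1)]) blast
  qed
  finally have "?M \<subseteq> ?P" .
  have "?P \<subseteq> umult imp (umult imp ?M ?N) ?M"
    by (intro umult_mono) auto
  also have "\<dots> \<subseteq> umult imp (uimp le imp ?M X) ?M"
    by (intro umult_mono umult_ulimp_subset subset_refl)
  also have "\<dots> \<subseteq> X"
    by (rule umult_uimp_subset)
  finally have "?P \<subseteq> X" .
  moreover have "?P \<subseteq> F"
    by (intro qfilter_umult_subset[OF assms(3)]) auto
  ultimately show ?thesis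
    using \<open>?M \<subseteq> ?P\<close> by blast
qed

lemma qfilter_Int_iff:
  assumes "integral_qBa le imp limp one" "X \<in> upsets le" "qfilter le imp F"
  shows "qfilter le imp (F \<inter> X) \<longleftrightarrow>
           one \<in> F \<inter> X \<inter> ulimp le imp (F \<inter> X) (uimp le imp (F \<inter> X) X)"
    (is "qfilter le imp ?M \<longleftrightarrow> one \<in> ?M \<inter> ?N")
proof -
  have M_upset: "?M \<in> upsets le"
    using assms(2,3) upsets_Int unfolding qfilter_def by blast
  show ?thesis
  proof
    assume M_filter: "qfilter le imp ?M"
    then have "umult imp ?M ?M \<subseteq> ?M"
      unfolding qfilter_def by blast
    then have "?M \<subseteq> uimp le imp ?M X"
      using umult_subset_iff_subset_uimp[OF M_upset] by blast
    with \<open>umult imp ?M ?M \<subseteq> ?M\<close> have "umult imp ?M ?M \<subseteq> uimp le imp ?M X"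
      by blast
    then have "?M \<subseteq> ?N"
      using umult_subset_iff_subset_ulimp[OF M_upset] by blast
    moreover have "one \<in> ?M"
      using qfilter_contains_one[OF assms(1) M_filter] .
    ultimately show "one \<in> ?M \<inter> ?N"
      by blast
  next
    assume one: "one \<in> ?M \<inter> ?N"
    then have "?M \<subseteq> umult imp ?M ?N"
      by (intro subset_umult_if_one_right[OF assms(1)]) blast
    also have "\<dots> \<subseteq> uimp le imp ?M X"
      by (rule umult_ulimp_subset)
    finally have "umult imp ?M ?M \<subseteq> umult imp (uimp le imp ?M X) ?M"
      by (rule umult_mono[OF _ subset_refl])
    also have "\<dots> \<subseteq> X"
      by (rule umult_uimp_subset)
    finally have "umult imp ?M ?M \<subseteq> X" .
    moreover have "umult imp ?M ?M \<subseteq> F"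
      by (rule qfilter_umult_subset[OF assms(3)]) auto
    ultimately show "qfilter le imp ?M"
      using one M_upset unfolding qfilter_def by blast
  qed
qed

theorem proposition3p2:
  fixes le :: "'a \<Rightarrow> 'a \<Rightarrow> bool" and imp limp :: "'a \<Rightarrow> 'a \<Rightarrow> 'a" and one :: 'a
    and X F :: "'a set"
  assumes "integral_qBa le imp limp one"
    and "X \<in> upsets le" and "F \<in> upsets le"
    and "qfilter le imp F"
  shows "mu F X = umult imp (mu F X) (mu F X) \<inter> X
    \<and> (one \<in> ulimp le imp (mu F X) (uimp le imp (mu F X) X) \<longrightarrow>
         umult imp (umult imp (mu F X) (mu F (ulimp le imp (mu F X) (uimp le imp (mu F X) X))))
               (mu F X) = mu F X)
    \<and> (qfilter le imp (mu F X) \<longleftrightarrow>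
         one \<in> mu F X \<inter> ulimp le imp (mu F X) (uimp le imp (mu F X) X))"
  using Int_eq_umult_self_Int[OF assms(1,2,4)] umult_Int_ulimp_Int[OF assms(1,2,4)]
    qfilter_Int_iff[OF assms(1,2,4)]
  unfolding mu_def by blast

end
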